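(* Let $\chi\in\chi(G)$ be a character and $\lambda\in\Lambda^\chi$. If $C\subset A\subset[n]$ are subsets with $L(C)\subset S^\chi_\lambda$ and $L(A)\subset S^\chi_\lambda$, then $L(B)\subset S^\chi_\lambda$ for every $B$ with $C\subset B\subset A$.
   Context: $G$ diagonalizable over $\mathbf C$ acting on $X=\mathbf A^n_{\mathbf C}$ by $g\cdot x=(\chi_1(g)x_1,\dots,\chi_n(g)x_n)$. $\chi(G)$ characters, $\Gamma(G)$ one-parameter subgroups, pairing $\chi(\lambda(t))=t^{\langle\chi,\lambda\rangle}$; fixed norm on $\Gamma(G)$ from an inner product on $\Gamma(G)_{\mathbf R}$ integral on $\Gamma(G)$. $[n]=\{1,\dots,n\}$. $x$ is $\chi$-unstable if some $\lambda$ with $\lim_{t\to0}\lambda(t)x$ existing has $\langle\chi,\lambda\rangle<0$; for unstable $x$, $\lambda_{\chi,x}$ is the unique indivisible one-parameter subgroup with existing limit minimizing $\langle\chi,\lambda\rangle/\|\lambda\|$ among nonzero such. $\Lambda^\chi=\{\lambda_{\chi,x}\}$, $S^\chi_\lambda=\{x\text{ unstable}:\lambda_{\chi,x}=\lambda\}$. For $S\subset[n]$, $L(S)=\{x:x_i\ne0\iff i\in S\}$. *)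

theory Defs
  imports "HOL-Analysis.Analysis"
begin

text \<open>
  The diagonalizable group G enters only through its lattice of
  one-parameter subgroups Gamma(G), identified with int^'r (an integral basis), and the
  pairing of characters with one-parameter subgroups.  A character is recorded by the
  linear functional it induces on Gamma(G), i.e. a vector in int^'r with
  pairing <chi,lambda> = sum_i chi_i * lambda_i.  The coordinate characters chi_1..chi_n
  of the action are the map  wt :: 'n => int^'r  (the index type 'n plays the role of [n]).
  The inner product on Gamma(G)_R, integral on Gamma(G), is given by a symmetric,
  positive definite integer Gram matrix Q.
\<close>

definition pair :: "int^'r::finite \<Rightarrow> int^'r \<Rightarrow> int" where
  "pair c l = (\<Sum>i\<in>UNIV. c$i * l$i)"

definition inner_prod_ok :: "int^'r::finite^'r \<Rightarrow> bool" where
  "inner_prod_ok Q \<longleftrightarrow> (\<forall>i j. Q$i$j = Q$j$i) \<and>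
     (\<forall>v::real^'r. v \<noteq> 0 \<longrightarrow> (\<Sum>i\<in>UNIV. \<Sum>j\<in>UNIV. v$i * real_of_int (Q$i$j) * v$j) > 0)"

definition lnorm :: "int^'r::finite^'r \<Rightarrow> int^'r \<Rightarrow> real" where
  "lnorm Q l = sqrt (real_of_int (\<Sum>i\<in>UNIV. \<Sum>j\<in>UNIV. l$i * Q$i$j * l$j))"

definition ops_act :: "('n::finite \<Rightarrow> int^'r::finite) \<Rightarrow> int^'r \<Rightarrow> complex \<Rightarrow> complex^'n \<Rightarrow> complex^'n" where
  "ops_act wt l t x = (\<chi> i. t powi (pair (wt i) l) * x$i)"

definition limit_exists :: "('n::finite \<Rightarrow> int^'r::finite) \<Rightarrow> int^'r \<Rightarrow> complex^'n \<Rightarrow> bool" where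
  "limit_exists wt l x \<longleftrightarrow> (\<exists>y. ((\<lambda>t. ops_act wt l t x) \<longlongrightarrow> y) (at 0))"

definition unstable :: "('n::finite \<Rightarrow> int^'r::finite) \<Rightarrow> int^'r \<Rightarrow> complex^'n \<Rightarrow> bool" where
  "unstable wt c x \<longleftrightarrow> (\<exists>l. limit_exists wt l x \<and> pair c l < 0)"

definition indivisible :: "int^'r \<Rightarrow> bool" where
  "indivisible l \<longleftrightarrow> l \<noteq> 0 \<and> (\<forall>(k::int) m. l = k *s m \<longrightarrow> k = 1 \<or> k = -1)"

definition opt_ops :: "('n::finite \<Rightarrow> int^'r::finite) \<Rightarrow> int^'r^'r \<Rightarrow> int^'r \<Rightarrow> complex^'n \<Rightarrow> int^'r" where
  "opt_ops wt Q c x = (THE l. indivisible l \<and> limit_exists wt l x \<and>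
      (\<forall>m. m \<noteq> 0 \<and> limit_exists wt m x \<longrightarrow>
         real_of_int (pair c l) / lnorm Q l \<le> real_of_int (pair c m) / lnorm Q m))"

definition Lambda_set :: "('n::finite \<Rightarrow> int^'r::finite) \<Rightarrow> int^'r^'r \<Rightarrow> int^'r \<Rightarrow> (int^'r) set" where
  "Lambda_set wt Q c = {opt_ops wt Q c x | x. unstable wt c x}"

definition stratum :: "('n::finite \<Rightarrow> int^'r::finite) \<Rightarrow> int^'r^'r \<Rightarrow> int^'r \<Rightarrow> int^'r \<Rightarrow> (complex^'n) set" where
  "stratum wt Q c l = {x. unstable wt c x \<and> opt_ops wt Q c x = l}"

definition Lcell :: "'n::finite set \<Rightarrow> (complex^'n) set" where
  "Lcell S = {x. \<forall>i. x$i \<noteq> 0 \<longleftrightarrow> i \<in> S}"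

end

(* For x in the cell L(S), a one-parameter subgroup lambda has a limit at x exactly when it lies
   in the lattice cone K_S = {lambda. <chi_i, lambda> >= 0 for i in S}; hence lambda_{chi,x} depends
   only on S: it is the indivisible point of K_S minimizing <chi, lambda> / |lambda|.  For
   C <= B <= A the cones satisfy K_A <= K_B <= K_C, so a lambda that lies in K_A and is optimal on
   the larger cone K_C is optimal on K_B as well.

   The substance is that this optimum exists and is unique.  Over the reals the slope attains its
   minimum on the cone (compactness of its unit sphere); normalized by <chi, v> = -1, the minimizers
   are the minimizers of the positive definite form on a convex slice, hence form a single ray by
   strict convexity.  The ray is rational: the minimizer is a stationary point of the form on the
   rational subspace cut out by the active constraints, and applying a Q-linear retraction of R onto
   Q to each coordinate produces another such point, which positive definiteness forces to be equal
   to it.  Clearing denominators and dividing by the content gives the unique indivisible optimum. *)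

theory Submission
  imports Defs
begin

section \<open>Positive definite forms and rational stationary points\<close>

definition qform :: "real^'n::finite^'n \<Rightarrow> real^'n \<Rightarrow> real^'n \<Rightarrow> real" where
  "qform A u v = u \<bullet> (A *v v)"

definition pos_def :: "real^'n::finite^'n \<Rightarrow> bool" where
  "pos_def A \<longleftrightarrow> transpose A = A \<and> (\<forall>v. v \<noteq> 0 \<longrightarrow> 0 < qform A v v)"

lemma qform_eq_double_sum: "qform A u v = (\<Sum>i\<in>UNIV. \<Sum>j\<in>UNIV. u$i * A$i$j * v$j)"
  unfolding qform_def inner_vec_def matrix_vector_mult_def
  by (simp add: sum_distrib_left mult.assoc)

lemma qform_commute: "pos_def A \<Longrightarrow> qform A u v = qform A v u"
  unfolding pos_def_def qform_def
  by (metis dot_lmul_matrix inner_commute transpose_matrix_vector)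

lemma qform_pos: "pos_def A \<Longrightarrow> v \<noteq> 0 \<Longrightarrow> 0 < qform A v v"
  unfolding pos_def_def by blast

lemma qform_diff_right: "qform A w (u - v) = qform A w u - qform A w v"
  unfolding qform_def by (simp add: matrix_vector_mult_diff_distrib inner_diff_right)

lemma qform_scaleR: "qform A (a *\<^sub>R v) (a *\<^sub>R v) = a\<^sup>2 * qform A v v"
  unfolding qform_def by (simp add: matrix_vector_mult_scaleR power2_eq_square)

lemma qform_add_scaleR:
  assumes "pos_def A"
  shows "qform A (v + t *\<^sub>R d) (v + t *\<^sub>R d) = qform A v v + 2 * t * qform A v d + t\<^sup>2 * qform A d d"
  using qform_commute[OF assms, of d v] unfolding qform_def
  by (simp add: matrix_vector_right_distrib matrix_vector_mult_scaleR inner_add_left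
      inner_add_right power2_eq_square algebra_simps)

lemma in_span_if_orthogonal_to_annihilator:
  fixes y :: "'a::euclidean_space"
  assumes "\<And>d. (\<forall>r\<in>R. r \<bullet> d = 0) \<Longrightarrow> y \<bullet> d = 0"
  shows "y \<in> span R"
proof -
  obtain s z where s: "s \<in> span R" and z: "\<And>w. w \<in> span R \<Longrightarrow> orthogonal z w" and y: "y = s + z"
    using orthogonal_subspace_decomp_exists by blast
  have "\<forall>r\<in>R. r \<bullet> z = 0"
    using z[OF span_base] by (simp add: orthogonal_def inner_commute)
  then have "y \<bullet> z = 0" by (rule assms)
  moreover have "s \<bullet> z = 0"
    using z[OF s] by (simp add: orthogonal_def inner_commute)
  ultimately have "z = 0" unfolding y by (simp add: inner_add_left)
  with s y show ?thesis by simp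
qed

locale Rats_retraction = additive \<psi> for \<psi> :: "real \<Rightarrow> real" +
  assumes mult_Rats: "a \<in> \<rat> \<Longrightarrow> \<psi> (a * x) = a * \<psi> x"
    and range_Rats: "\<psi> x \<in> \<rat>"
    and one: "\<psi> 1 = 1"
begin

lemma Rats_fixed: "a \<in> \<rat> \<Longrightarrow> \<psi> a = a"
  using mult_Rats[of a 1] one by simp

lemma sum_Rats_mult:
  "(\<And>i. i \<in> I \<Longrightarrow> a i \<in> \<rat>) \<Longrightarrow> \<psi> (\<Sum>i\<in>I. a i * f i) = (\<Sum>i\<in>I. a i * \<psi> (f i))"
  by (simp add: sum mult_Rats)

end

lemma Rats_retraction_exists: "\<exists>\<psi>. Rats_retraction \<psi>"
proof -
  interpret vp: vector_space_pair "\<lambda>q x. of_rat q * (x::real)" "(*) :: rat \<Rightarrow> rat \<Rightarrow> rat"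
    by unfold_locales (auto simp: algebra_simps of_rat_add of_rat_mult)
  have ind: "vp.vs1.independent {1::real}"
    by (rule vp.vs1.independent_insertI) (auto simp: vp.vs1.span_empty vp.vs1.independent_empty)
  define \<phi> where "\<phi> = vp.construct {1::real} (\<lambda>_. 1)"
  have lin: "Vector_Spaces.linear (\<lambda>q x. of_rat q * (x::real)) ((*) :: rat \<Rightarrow> rat \<Rightarrow> rat) \<phi>"
    unfolding \<phi>_def by (rule vp.linear_construct[OF ind])
  have "\<phi> 1 = 1"
    unfolding \<phi>_def by (rule vp.construct_basis[OF ind]) simp
  then have "Rats_retraction (\<lambda>x. of_rat (\<phi> x))"
    using lin unfolding Vector_Spaces.linear_iff
    by unfold_locales (auto simp: of_rat_add of_rat_mult elim!: Rats_cases)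
  then show ?thesis by blast
qed

lemma rational_if_stationary:
  fixes A :: "real^'n::finite^'n" and R :: "(real^'n) set"
  assumes A: "pos_def A" and A_rat: "\<And>i j. A$i$j \<in> \<rat>"
    and "finite R" and R_rat: "\<And>r j. r \<in> R \<Longrightarrow> r$j \<in> \<rat>"
    and values_rat: "\<And>r. r \<in> R \<Longrightarrow> r \<bullet> v \<in> \<rat>"
    and stationary: "\<And>d. (\<forall>r\<in>R. r \<bullet> d = 0) \<Longrightarrow> qform A d v = 0"
  shows "v$j \<in> \<rat>"
proof -
  have "A *v v \<in> span R"
    using stationary by (intro in_span_if_orthogonal_to_annihilator) (simp add: qform_def inner_commute)
  then obtain a where Av: "A *v v = (\<Sum>r\<in>R. a r *\<^sub>R r)"
    using span_finite[OF \<open>finite R\<close>] by auto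
  obtain \<psi> where "Rats_retraction \<psi>"
    using Rats_retraction_exists by blast
  then interpret Rats_retraction \<psi> .
  define \<Psi> where "\<Psi> u = (\<chi> j. \<psi> (u$j))" for u :: "real^'n"
  have inner_\<Psi>: "r \<bullet> \<Psi> u = \<psi> (r \<bullet> u)" if "\<And>j. r$j \<in> \<rat>" for r u
    unfolding \<Psi>_def inner_vec_def using that by (simp add: sum_Rats_mult)
  have "A *v \<Psi> v = \<Psi> (A *v v)"
    unfolding \<Psi>_def matrix_vector_mult_def using A_rat by (simp add: sum_Rats_mult)
  also have "\<dots> = (\<Sum>r\<in>R. \<psi> (a r) *\<^sub>R r)"
    unfolding Av \<Psi>_def using R_rat
    by (simp add: vec_eq_iff sum_component mult.commute[of "a _"] mult.commute[of "\<psi> _"] sum_Rats_mult)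
  finally have A\<Psi>v: "A *v \<Psi> v = (\<Sum>r\<in>R. \<psi> (a r) *\<^sub>R r)" .
  define d where "d = v - \<Psi> v"
  have "r \<bullet> d = 0" if "r \<in> R" for r
    using inner_\<Psi>[OF R_rat[OF that]] Rats_fixed[OF values_rat[OF that]]
    unfolding d_def by (simp add: inner_diff_right)
  then have "qform A d d = 0"
    using stationary[of d] unfolding qform_diff_right[of A d v "\<Psi> v", folded d_def]
    by (simp add: qform_def A\<Psi>v inner_sum_right inner_commute[of d])
  then have "v = \<Psi> v"
    using qform_pos[OF A, of d] unfolding d_def by auto
  then show ?thesis
    by (metis \<Psi>_def range_Rats vec_lambda_beta)
qed

section \<open>Minimizing the slope on a polyhedral cone\<close>

definition dual_cone :: "(real^'n::finite) set \<Rightarrow> (real^'n) set" where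
  "dual_cone W = {v. \<forall>w\<in>W. 0 \<le> w \<bullet> v}"

definition slope :: "real^'n::finite^'n \<Rightarrow> real^'n \<Rightarrow> real^'n \<Rightarrow> real" where
  "slope A c v = (c \<bullet> v) / sqrt (qform A v v)"

lemma dual_cone_scaleR: "v \<in> dual_cone W \<Longrightarrow> 0 \<le> a \<Longrightarrow> a *\<^sub>R v \<in> dual_cone W"
  unfolding dual_cone_def by simp

lemma dual_cone_add: "u \<in> dual_cone W \<Longrightarrow> v \<in> dual_cone W \<Longrightarrow> u + v \<in> dual_cone W"
  unfolding dual_cone_def by (simp add: inner_add_right)

lemma closed_dual_cone: "closed (dual_cone W)"
proof -
  have "dual_cone W = (\<Inter>w\<in>W. {v. 0 \<le> w \<bullet> v})"
    unfolding dual_cone_def by auto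
  then show ?thesis
    by (simp add: closed_INT closed_halfspace_ge)
qed

lemma slope_scaleR: "0 < a \<Longrightarrow> slope A c (a *\<^sub>R v) = slope A c v"
  unfolding slope_def qform_scaleR by (simp add: real_sqrt_mult)

lemma slope_min_exists:
  assumes A: "pos_def A" and v0: "v0 \<in> dual_cone W - {0}"
  obtains u where "is_arg_min (slope A c) (\<lambda>v. v \<in> dual_cone W - {0}) u"
proof -
  let ?K = "dual_cone W \<inter> sphere 0 1"
  have "compact ?K"
    by (simp add: closed_Int_compact closed_dual_cone)
  moreover have "continuous_on ?K (slope A c)"
  proof -
    have "continuous_on ?K (\<lambda>v. qform A v v)"
      unfolding qform_eq_double_sum by (intro continuous_intros)
    moreover have "qform A v v \<noteq> 0" if "v \<in> ?K" for v
      using qform_pos[OF A, of v] that by (cases "v = 0") auto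
    ultimately show ?thesis
      unfolding slope_def[abs_def] by (intro continuous_intros) auto
  qed
  moreover have "(1 / norm v0) *\<^sub>R v0 \<in> ?K"
    using v0 by (auto intro: dual_cone_scaleR)
  ultimately obtain u where u: "u \<in> ?K" and u_min: "\<And>v. v \<in> ?K \<Longrightarrow> slope A c u \<le> slope A c v"
    using continuous_attains_inf[of ?K "slope A c"] by blast
  have "slope A c u \<le> slope A c v" if v: "v \<in> dual_cone W" "v \<noteq> 0" for v
  proof -
    have "(1 / norm v) *\<^sub>R v \<in> ?K"
      using v by (auto intro: dual_cone_scaleR)
    then have "slope A c u \<le> slope A c ((1 / norm v) *\<^sub>R v)"
      by (rule u_min)
    with v show ?thesis
      by (simp add: slope_scaleR)
  qed
  moreover have "u \<in> dual_cone W - {0}"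
    using u by auto
  ultimately show ?thesis
    by (intro that[of u]) (simp add: is_arg_min_linorder)
qed

lemma qform_min_of_slope_min:
  assumes A: "pos_def A" and u: "is_arg_min (slope A c) (\<lambda>v. v \<in> dual_cone W - {0}) u"
    and cu: "c \<bullet> u < 0"
  shows "is_arg_min (\<lambda>v. qform A v v) (\<lambda>v. v \<in> dual_cone W \<and> c \<bullet> v = -1) ((-1 / (c \<bullet> u)) *\<^sub>R u)"
proof -
  define p where "p = (-1 / (c \<bullet> u)) *\<^sub>R u"
  have "p \<in> dual_cone W"
    unfolding p_def using u cu by (intro dual_cone_scaleR) (simp_all add: is_arg_min_linorder)
  moreover have "c \<bullet> p = -1"
    unfolding p_def using cu by simp
  ultimately have p: "p \<in> dual_cone W" "c \<bullet> p = -1" .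
  have min: "qform A p p \<le> qform A v v" if v: "v \<in> dual_cone W" "c \<bullet> v = -1" for v
  proof -
    have "v \<noteq> 0" and "p \<noteq> 0"
      using v p by auto
    then have pos: "0 < qform A v v" "0 < qform A p p"
      using qform_pos[OF A] by auto
    have "slope A c p = slope A c u"
      unfolding p_def using cu by (intro slope_scaleR) simp
    also have "\<dots> \<le> slope A c v"
      using u v \<open>v \<noteq> 0\<close> by (simp add: is_arg_min_linorder)
    finally have "-1 / sqrt (qform A p p) \<le> -1 / sqrt (qform A v v)"
      unfolding slope_def p(2) v(2) .
    then have "inverse (sqrt (qform A v v)) \<le> inverse (sqrt (qform A p p))"
      by (simp add: divide_inverse)
    with pos show ?thesis
      by (simp add: inverse_le_iff_le)
  qed
  have "is_arg_min (\<lambda>v. qform A v v) (\<lambda>v. v \<in> dual_cone W \<and> c \<bullet> v = -1) p"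
    unfolding is_arg_min_linorder using p min by blast
  then show ?thesis
    unfolding p_def .
qed

text \<open>Moving from the minimizer along a direction that keeps the active constraints and the
  normalization stays feasible for small times, so the derivative of the form is nonnegative.\<close>

lemma qform_min_directional_nonneg:
  assumes A: "pos_def A" and "finite W"
    and p: "is_arg_min (\<lambda>v. qform A v v) (\<lambda>v. v \<in> dual_cone W \<and> c \<bullet> v = -1) p"
    and active: "\<And>w. w \<in> W \<Longrightarrow> w \<bullet> p = 0 \<Longrightarrow> w \<bullet> e = 0" and "c \<bullet> e = 0"
  shows "0 \<le> qform A p e"
proof -
  have "eventually (\<lambda>t. 0 \<le> w \<bullet> (p + t *\<^sub>R e)) (at_right 0)" if "w \<in> W" for w
  proof (cases "w \<bullet> p = 0")
    case True
    then show ?thesis using active[OF that] by (simp add: inner_add_right)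
  next
    case False
    then have "0 < w \<bullet> (p + 0 *\<^sub>R e)"
      using p that by (auto simp: is_arg_min_linorder dual_cone_def less_le)
    moreover have "((\<lambda>t. w \<bullet> (p + t *\<^sub>R e)) \<longlongrightarrow> w \<bullet> (p + 0 *\<^sub>R e)) (at_right 0)"
      by (intro tendsto_intros)
    ultimately have "eventually (\<lambda>t. 0 < w \<bullet> (p + t *\<^sub>R e)) (at_right 0)"
      by (rule order_tendstoD(1)[rotated])
    then show ?thesis
      by eventually_elim simp
  qed
  then have "eventually (\<lambda>t. p + t *\<^sub>R e \<in> dual_cone W) (at_right 0)"
    unfolding dual_cone_def using \<open>finite W\<close> by (simp add: eventually_ball_finite)
  moreover have "eventually (\<lambda>t. 0 < t) (at_right (0::real))"
    by (rule eventually_at_right_less)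
  ultimately have "eventually (\<lambda>t. 0 \<le> 2 * qform A p e + t * qform A e e) (at_right 0)"
  proof eventually_elim
    case (elim t)
    moreover have "c \<bullet> (p + t *\<^sub>R e) = -1"
      using p \<open>c \<bullet> e = 0\<close> by (simp add: is_arg_min_linorder inner_add_right)
    ultimately have "qform A p p \<le> qform A (p + t *\<^sub>R e) (p + t *\<^sub>R e)"
      using p by (simp add: is_arg_min_linorder)
    then have "0 \<le> t * (2 * qform A p e + t * qform A e e)"
      unfolding qform_add_scaleR[OF A] by (simp add: power2_eq_square algebra_simps)
    with \<open>0 < t\<close> show ?case
      by (simp add: zero_le_mult_iff)
  qed
  moreover have "((\<lambda>t. 2 * qform A p e + t * qform A e e) \<longlongrightarrow> 2 * qform A p e + 0 * qform A e e) (at_right 0)"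
    by (intro tendsto_intros)
  ultimately have "0 \<le> 2 * qform A p e + 0 * qform A e e"
    by (intro tendsto_lowerbound) auto
  then show ?thesis
    by simp
qed

lemma stationary_at_qform_min:
  assumes A: "pos_def A" and "finite W"
    and p: "is_arg_min (\<lambda>v. qform A v v) (\<lambda>v. v \<in> dual_cone W \<and> c \<bullet> v = -1) p"
    and active: "\<And>w. w \<in> W \<Longrightarrow> w \<bullet> p = 0 \<Longrightarrow> w \<bullet> d = 0" and "c \<bullet> d = 0"
  shows "qform A d p = 0"
proof -
  have "0 \<le> qform A p d" and "0 \<le> qform A p (- d)"
    using active \<open>c \<bullet> d = 0\<close> by (auto intro!: qform_min_directional_nonneg[OF A \<open>finite W\<close> p])
  moreover have "qform A p (- d) = - qform A p d"
    using qform_diff_right[of A p 0 d] by (simp add: qform_def)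
  ultimately have "qform A p d = 0"
    by linarith
  then show ?thesis
    using qform_commute[OF A, of d p] by simp
qed

lemma qform_min_unique:
  assumes A: "pos_def A"
    and p: "is_arg_min (\<lambda>v. qform A v v) (\<lambda>v. v \<in> dual_cone W \<and> c \<bullet> v = -1) p"
    and q: "is_arg_min (\<lambda>v. qform A v v) (\<lambda>v. v \<in> dual_cone W \<and> c \<bullet> v = -1) q"
  shows "p = q"
proof -
  let ?m = "(1/2) *\<^sub>R (p + q)"
  have "?m \<in> dual_cone W"
    using p q by (intro dual_cone_scaleR dual_cone_add) (simp_all add: is_arg_min_linorder)
  moreover have "c \<bullet> ?m = -1"
    using p q by (simp add: is_arg_min_linorder inner_add_right)
  ultimately have "qform A p p \<le> qform A ?m ?m"
    using p unfolding is_arg_min_linorder by blast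
  moreover have "qform A q q \<le> qform A p p"
    using p q unfolding is_arg_min_linorder by blast
  moreover have "4 * qform A ?m ?m + qform A (p - q) (p - q) = 2 * qform A p p + 2 * qform A q q"
  proof -
    have "qform A (p + q) (p + q) = qform A p p + 2 * qform A p q + qform A q q"
      using qform_add_scaleR[OF A, of p 1 q] by simp
    moreover have "qform A (p - q) (p - q) = qform A p p - 2 * qform A p q + qform A q q"
      using qform_add_scaleR[OF A, of p "-1" q] by simp
    ultimately show ?thesis
      unfolding qform_scaleR by (simp add: power2_eq_square field_simps)
  qed
  ultimately have "qform A (p - q) (p - q) \<le> 0"
    by linarith
  then show ?thesis
    using qform_pos[OF A, of "p - q"] by auto
qed

lemma slope_neg_iff: "pos_def A \<Longrightarrow> v \<noteq> 0 \<Longrightarrow> slope A c v < 0 \<longleftrightarrow> c \<bullet> v < 0"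
  unfolding slope_def using qform_pos[of A v] by (simp add: divide_less_0_iff)

lemma rational_slope_min_exists:
  fixes A :: "real^'n::finite^'n"
  assumes A: "pos_def A" and A_rat: "\<And>i j. A$i$j \<in> \<rat>"
    and "finite W" and W_rat: "\<And>w j. w \<in> W \<Longrightarrow> w$j \<in> \<rat>" and c_rat: "\<And>j. c$j \<in> \<rat>"
    and v0: "v0 \<in> dual_cone W" "c \<bullet> v0 < 0"
  obtains p where "\<And>j. p$j \<in> \<rat>" "is_arg_min (slope A c) (\<lambda>v. v \<in> dual_cone W - {0}) p"
proof -
  have "v0 \<noteq> 0"
    using v0 by auto
  then obtain u where u: "is_arg_min (slope A c) (\<lambda>v. v \<in> dual_cone W - {0}) u"
    using slope_min_exists[OF A] v0 by blast
  then have "u \<noteq> 0" and "slope A c u \<le> slope A c v0"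
    using v0 \<open>v0 \<noteq> 0\<close> by (auto simp: is_arg_min_linorder)
  then have cu: "c \<bullet> u < 0"
    using slope_neg_iff[OF A] v0 \<open>v0 \<noteq> 0\<close> by (meson le_less_trans)
  define p where "p = (-1 / (c \<bullet> u)) *\<^sub>R u"
  have p_min: "is_arg_min (\<lambda>v. qform A v v) (\<lambda>v. v \<in> dual_cone W \<and> c \<bullet> v = -1) p"
    unfolding p_def using qform_min_of_slope_min[OF A u cu] .
  then have cp: "c \<bullet> p = -1"
    by (simp add: is_arg_min_linorder)
  let ?R = "insert c {w \<in> W. w \<bullet> p = 0}"
  have "p$j \<in> \<rat>" for j
  proof (rule rational_if_stationary[OF A A_rat])
    show "finite ?R"
      using \<open>finite W\<close> by simp
    show "r$j \<in> \<rat>" if "r \<in> ?R" for r j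
      using that W_rat c_rat by auto
    show "r \<bullet> p \<in> \<rat>" if "r \<in> ?R" for r
      using that cp by auto
    show "qform A d p = 0" if "\<forall>r\<in>?R. r \<bullet> d = 0" for d
      using that by (intro stationary_at_qform_min[OF A \<open>finite W\<close> p_min]) auto
  qed
  moreover have "slope A c p = slope A c u"
    unfolding p_def using cu by (intro slope_scaleR) simp
  then have "is_arg_min (slope A c) (\<lambda>v. v \<in> dual_cone W - {0}) p"
    using u p_min cp unfolding is_arg_min_linorder by auto
  ultimately show ?thesis
    using that by blast
qed

lemma slope_min_ray_unique:
  assumes A: "pos_def A"
    and u: "is_arg_min (slope A c) (\<lambda>v. v \<in> dual_cone W - {0}) u" and "c \<bullet> u < 0"
    and v: "is_arg_min (slope A c) (\<lambda>v. v \<in> dual_cone W - {0}) v" and "c \<bullet> v < 0"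
  shows "(c \<bullet> v) *\<^sub>R u = (c \<bullet> u) *\<^sub>R v"
proof -
  have "(-1 / (c \<bullet> u)) *\<^sub>R u = (-1 / (c \<bullet> v)) *\<^sub>R v"
    using qform_min_of_slope_min[OF A u] qform_min_of_slope_min[OF A v] assms
    by (blast intro: qform_min_unique[OF A])
  then have "((c \<bullet> u) * (c \<bullet> v)) *\<^sub>R ((-1 / (c \<bullet> u)) *\<^sub>R u) =
      ((c \<bullet> u) * (c \<bullet> v)) *\<^sub>R ((-1 / (c \<bullet> v)) *\<^sub>R v)"
    by simp
  with assms show ?thesis
    by (simp add: field_simps)
qed

section \<open>Indivisible lattice vectors\<close>

lemma clear_denominators:
  fixes v :: "real^'n::finite"
  assumes "\<And>j. v$j \<in> \<rat>"
  obtains N :: int where "0 < N" "\<And>j. of_int N * v$j \<in> \<int>"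
proof -
  have "\<exists>b::int. 0 < b \<and> of_int b * v$j \<in> \<int>" for j
  proof -
    obtain r where r: "v$j = of_rat r"
      using assms by (auto elim: Rats_cases)
    obtain n d where nd: "quotient_of r = (n, d)"
      by (cases "quotient_of r")
    have "0 < d"
      using quotient_of_denom_pos[OF nd] .
    moreover have "of_int d * v$j = of_int n"
      using quotient_of_div[OF nd] \<open>0 < d\<close> r by (simp add: of_rat_divide)
    ultimately show ?thesis
      by (metis Ints_of_int)
  qed
  then obtain b where b: "\<And>j. 0 < b j" "\<And>j. of_int (b j) * v$j \<in> \<int>"
    by metis
  have "of_int (\<Prod>k\<in>UNIV. b k) * v$j \<in> \<int>" for j
  proof -
    have "(\<Prod>k\<in>UNIV. b k) = b j * (\<Prod>k\<in>UNIV - {j}. b k)"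
      by (simp add: prod.remove)
    then have "of_int (\<Prod>k\<in>UNIV. b k) * v$j = (of_int (b j) * v$j) * of_int (\<Prod>k\<in>UNIV - {j}. b k)"
      by simp
    then show ?thesis
      using b(2) by (metis Ints_mult Ints_of_int)
  qed
  moreover have "0 < (\<Prod>k\<in>UNIV. b k)"
    using b(1) by (simp add: prod_pos)
  ultimately show ?thesis
    using that by blast
qed

lemma indivisible_common_divisor:
  assumes "indivisible l" and "\<And>i. q dvd l$i"
  shows "q = 1 \<or> q = -1"
proof -
  have "l = q *s (\<chi> i. l$i div q)"
    using assms(2) by (simp add: vec_eq_iff)
  then show ?thesis
    using assms(1) unfolding indivisible_def by blast
qed

lemma indivisible_factor_exists:
  fixes l :: "int^'n::finite"
  assumes "l \<noteq> 0"
  shows "\<exists>k m. 0 < k \<and> indivisible m \<and> l = k *s m"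
  using assms
proof (induction "nat (\<Sum>i\<in>UNIV. \<bar>l$i\<bar>)" arbitrary: l rule: less_induct)
  case less
  show ?case
  proof (cases "indivisible l")
    case True
    then show ?thesis
      by (intro exI[of _ 1] exI[of _ l]) simp
  next
    case False
    then obtain k m where km: "l = k *s m" "k \<noteq> 1" "k \<noteq> -1"
      using \<open>l \<noteq> 0\<close> unfolding indivisible_def by blast
    then have "k \<noteq> 0"
      using \<open>l \<noteq> 0\<close> by auto
    define m' where "m' = sgn k *s m"
    have l_m': "l = \<bar>k\<bar> *s m'"
      unfolding m'_def km(1) vec_eq_iff by (simp add: abs_mult_sgn mult.assoc[symmetric])
    then have "m' \<noteq> 0"
      using \<open>l \<noteq> 0\<close> by auto
    then obtain i where "m'$i \<noteq> 0"
      by (auto simp: vec_eq_iff)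
    then have pos: "0 < (\<Sum>i\<in>UNIV. \<bar>m'$i\<bar>)"
      by (intro sum_pos2[of _ i]) auto
    have "2 \<le> \<bar>k\<bar>"
      using km(2,3) \<open>k \<noteq> 0\<close> by auto
    then have "2 * (\<Sum>i\<in>UNIV. \<bar>m'$i\<bar>) \<le> \<bar>k\<bar> * (\<Sum>i\<in>UNIV. \<bar>m'$i\<bar>)"
      using pos by (intro mult_right_mono) auto
    also have "\<dots> = (\<Sum>i\<in>UNIV. \<bar>l$i\<bar>)"
      unfolding l_m' by (simp add: sum_distrib_left abs_mult)
    finally have "nat (\<Sum>i\<in>UNIV. \<bar>m'$i\<bar>) < nat (\<Sum>i\<in>UNIV. \<bar>l$i\<bar>)"
      using pos by (simp add: nat_less_eq_zless)
    then obtain k' m'' where "0 < k'" "indivisible m''" "m' = k' *s m''"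
      using less.hyps \<open>m' \<noteq> 0\<close> by blast
    moreover have "0 < \<bar>k\<bar> * k'"
      using \<open>k \<noteq> 0\<close> \<open>0 < k'\<close> by simp
    moreover have "l = (\<bar>k\<bar> * k') *s m''"
      unfolding l_m' \<open>m' = k' *s m''\<close> by (rule vector_smult_assoc)
    ultimately show ?thesis
      by blast
  qed
qed

lemma indivisible_eq_if_proportional:
  fixes l1 l2 :: "int^'n::finite"
  assumes "indivisible l1" "indivisible l2" and proportional: "q *s l1 = p *s l2" and "0 < p * q"
  shows "l1 = l2"
proof -
  define g where "g = gcd p q"
  have "g \<noteq> 0"
    unfolding g_def using \<open>0 < p * q\<close> by auto
  then obtain p' q' where pq: "p = p' * g" "q = q' * g" and "coprime p' q'"
    using gcd_coprime_exists unfolding g_def by blast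
  have proportional': "q' * l1$i = p' * l2$i" for i
  proof -
    have "q * l1$i = p * l2$i"
      using proportional by (simp add: vec_eq_iff)
    then have "g * (q' * l1$i) = g * (p' * l2$i)"
      unfolding pq by (simp add: ac_simps)
    then show ?thesis
      using \<open>g \<noteq> 0\<close> by simp
  qed
  have "q' dvd l2$i" for i
  proof -
    have "q' dvd p' * l2$i"
      unfolding proportional'[symmetric] by simp
    with \<open>coprime p' q'\<close> show ?thesis
      by (simp add: coprime_dvd_mult_right_iff coprime_commute)
  qed
  then have q': "q' = 1 \<or> q' = -1"
    using \<open>indivisible l2\<close> indivisible_common_divisor by blast
  have "p' dvd l1$i" for i
  proof -
    have "p' dvd q' * l1$i"
      unfolding proportional' by simp
    with \<open>coprime p' q'\<close> show ?thesis
      by (simp add: coprime_dvd_mult_right_iff)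
  qed
  then have p': "p' = 1 \<or> p' = -1"
    using \<open>indivisible l1\<close> indivisible_common_divisor by blast
  have "0 < (p' * q') * g\<^sup>2"
    using \<open>0 < p * q\<close> unfolding pq by (simp add: power2_eq_square ac_simps)
  then have "0 < p' * q'"
    using \<open>g \<noteq> 0\<close> by (simp add: zero_less_mult_iff)
  then have "p' = q'"
    using p' q' by auto
  then show ?thesis
    using proportional' q' by (auto simp: vec_eq_iff)
qed

section \<open>Optimal one-parameter subgroups of a lattice cone\<close>

definition of_int_vec :: "int^'n::finite \<Rightarrow> real^'n" where
  "of_int_vec l = (\<chi> i. of_int (l$i))"

definition of_int_mat :: "int^'n::finite^'n \<Rightarrow> real^'n^'n" where
  "of_int_mat Q = (\<chi> i j. of_int (Q$i$j))"

lemma of_int_vec_Rats: "of_int_vec l $ j \<in> \<rat>"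
  by (simp add: of_int_vec_def)

lemma of_int_vec_eq_iff: "of_int_vec k = of_int_vec l \<longleftrightarrow> k = l"
  by (simp add: of_int_vec_def vec_eq_iff)

lemma of_int_vec_eq_0_iff: "of_int_vec l = 0 \<longleftrightarrow> l = 0"
  by (simp add: of_int_vec_def vec_eq_iff)

lemma of_int_vec_smult: "of_int_vec (k *s l) = of_int k *\<^sub>R of_int_vec l"
  by (simp add: of_int_vec_def vec_eq_iff)

lemma inner_of_int_vec: "of_int_vec c \<bullet> of_int_vec l = real_of_int (pair c l)"
  by (simp add: of_int_vec_def pair_def inner_vec_def)

lemma pos_def_of_int_mat: "inner_prod_ok Q \<Longrightarrow> pos_def (of_int_mat Q)"
  unfolding inner_prod_ok_def pos_def_def qform_eq_double_sum
  by (simp add: of_int_mat_def transpose_def vec_eq_iff)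

lemma lnorm_eq_qform: "lnorm Q l = sqrt (qform (of_int_mat Q) (of_int_vec l) (of_int_vec l))"
  by (simp add: lnorm_def qform_eq_double_sum of_int_mat_def of_int_vec_def)

definition lattice_cone :: "(int^'r::finite) set \<Rightarrow> (int^'r) set" where
  "lattice_cone W = {l. \<forall>w\<in>W. 0 \<le> pair w l}"

lemma of_int_vec_in_dual_cone_iff: "of_int_vec l \<in> dual_cone (of_int_vec ` W) \<longleftrightarrow> l \<in> lattice_cone W"
  by (simp add: dual_cone_def lattice_cone_def inner_of_int_vec)

lemma smult_in_lattice_cone_iff: "0 < k \<Longrightarrow> k *s l \<in> lattice_cone W \<longleftrightarrow> l \<in> lattice_cone W"
  unfolding of_int_vec_in_dual_cone_iff[symmetric] of_int_vec_smult dual_cone_def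
  by (simp add: zero_le_mult_iff)

definition lattice_slope :: "int^'r::finite^'r \<Rightarrow> int^'r \<Rightarrow> int^'r \<Rightarrow> real" where
  "lattice_slope Q c l = real_of_int (pair c l) / lnorm Q l"

lemma lattice_slope_eq_slope: "lattice_slope Q c l = slope (of_int_mat Q) (of_int_vec c) (of_int_vec l)"
  by (simp add: lattice_slope_def slope_def lnorm_eq_qform inner_of_int_vec)

definition optimal_ops :: "int^'r::finite^'r \<Rightarrow> int^'r \<Rightarrow> (int^'r) set \<Rightarrow> int^'r \<Rightarrow> bool" where
  "optimal_ops Q c W l \<longleftrightarrow> indivisible l \<and> l \<in> lattice_cone W \<and>
     (\<forall>m \<in> lattice_cone W - {0}. lattice_slope Q c l \<le> lattice_slope Q c m)"

lemma lattice_point_slope_min_exists: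
  fixes Q :: "int^'r::finite^'r"
  assumes Q: "inner_prod_ok Q" and "finite W" and "l' \<in> lattice_cone W" "pair c l' < 0"
  obtains l where "l \<in> lattice_cone W - {0}"
    "is_arg_min (slope (of_int_mat Q) (of_int_vec c)) (\<lambda>v. v \<in> dual_cone (of_int_vec ` W) - {0}) (of_int_vec l)"
proof -
  obtain p where p_rat: "\<And>j. p$j \<in> \<rat>"
    and p: "is_arg_min (slope (of_int_mat Q) (of_int_vec c)) (\<lambda>v. v \<in> dual_cone (of_int_vec ` W) - {0}) p"
  proof (rule rational_slope_min_exists[OF pos_def_of_int_mat[OF Q], of "of_int_vec ` W" "of_int_vec c" "of_int_vec l'"])
    show "of_int_vec l' \<in> dual_cone (of_int_vec ` W)" "of_int_vec c \<bullet> of_int_vec l' < 0"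
      using assms by (simp_all add: of_int_vec_in_dual_cone_iff inner_of_int_vec)
  qed (use \<open>finite W\<close> in \<open>auto simp: of_int_mat_def of_int_vec_Rats\<close>)
  obtain N :: int where "0 < N" and N: "\<And>j. of_int N * p$j \<in> \<int>"
    using clear_denominators[OF p_rat] by blast
  define l where "l = (\<chi> j. \<lfloor>of_int N * p$j\<rfloor>)"
  have l: "of_int_vec l = of_int N *\<^sub>R p"
    unfolding l_def of_int_vec_def using N by (simp add: vec_eq_iff)
  have "of_int_vec l \<in> dual_cone (of_int_vec ` W) - {0}"
    unfolding l using p \<open>0 < N\<close> by (auto simp: is_arg_min_linorder intro: dual_cone_scaleR)
  moreover have "slope (of_int_mat Q) (of_int_vec c) (of_int_vec l) = slope (of_int_mat Q) (of_int_vec c) p"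
    unfolding l using \<open>0 < N\<close> by (simp add: slope_scaleR)
  ultimately show ?thesis
    using p by (intro that) (auto simp: is_arg_min_linorder of_int_vec_in_dual_cone_iff of_int_vec_eq_0_iff)
qed

lemma optimal_ops_slope_min:
  fixes Q :: "int^'r::finite^'r"
  assumes Q: "inner_prod_ok Q" and "finite W" and "l' \<in> lattice_cone W" "pair c l' < 0"
    and l: "optimal_ops Q c W l"
  shows "is_arg_min (slope (of_int_mat Q) (of_int_vec c)) (\<lambda>v. v \<in> dual_cone (of_int_vec ` W) - {0}) (of_int_vec l)"
proof -
  obtain l0 where l0: "l0 \<in> lattice_cone W - {0}"
    and l0_min: "is_arg_min (slope (of_int_mat Q) (of_int_vec c)) (\<lambda>v. v \<in> dual_cone (of_int_vec ` W) - {0}) (of_int_vec l0)"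
    using lattice_point_slope_min_exists[OF assms(1-4)] .
  have "lattice_slope Q c l \<le> lattice_slope Q c l0"
    using l l0 unfolding optimal_ops_def by blast
  with l0_min have "slope (of_int_mat Q) (of_int_vec c) (of_int_vec l) \<le> slope (of_int_mat Q) (of_int_vec c) v"
    if "v \<in> dual_cone (of_int_vec ` W) - {0}" for v
    using that unfolding lattice_slope_eq_slope is_arg_min_linorder by fastforce
  moreover have "of_int_vec l \<in> dual_cone (of_int_vec ` W) - {0}"
    using l by (simp add: optimal_ops_def indivisible_def of_int_vec_in_dual_cone_iff of_int_vec_eq_0_iff)
  ultimately show ?thesis
    by (simp add: is_arg_min_linorder)
qed

lemma lattice_slope_neg_iff: "inner_prod_ok Q \<Longrightarrow> l \<noteq> 0 \<Longrightarrow> lattice_slope Q c l < 0 \<longleftrightarrow> pair c l < 0"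
  by (simp add: lattice_slope_eq_slope slope_neg_iff pos_def_of_int_mat of_int_vec_eq_0_iff inner_of_int_vec)

lemma optimal_ops_pair_neg:
  assumes Q: "inner_prod_ok Q" and "l' \<in> lattice_cone W" "pair c l' < 0" and l: "optimal_ops Q c W l"
  shows "pair c l < 0"
proof -
  have "l' \<noteq> 0"
    using assms(3) by (auto simp: pair_def)
  then have "lattice_slope Q c l \<le> lattice_slope Q c l'"
    using assms(2) l by (simp add: optimal_ops_def)
  also have "\<dots> < 0"
    using lattice_slope_neg_iff[OF Q \<open>l' \<noteq> 0\<close>] assms(3) by simp
  finally show ?thesis
    using l lattice_slope_neg_iff[OF Q] by (simp add: optimal_ops_def indivisible_def)
qed

lemma ex1_optimal_ops:
  fixes Q :: "int^'r::finite^'r"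
  assumes Q: "inner_prod_ok Q" and "finite W" and l': "l' \<in> lattice_cone W" "pair c l' < 0"
  shows "\<exists>!l. optimal_ops Q c W l"
proof (rule ex_ex1I)
  obtain l0 where l0: "l0 \<in> lattice_cone W - {0}"
    and l0_min: "is_arg_min (slope (of_int_mat Q) (of_int_vec c)) (\<lambda>v. v \<in> dual_cone (of_int_vec ` W) - {0}) (of_int_vec l0)"
    using lattice_point_slope_min_exists[OF assms] .
  then obtain k l where "0 < k" "indivisible l" and l0_l: "l0 = k *s l"
    using indivisible_factor_exists by blast
  have "l \<in> lattice_cone W"
    using l0 \<open>0 < k\<close> unfolding l0_l by (simp add: smult_in_lattice_cone_iff)
  moreover have "lattice_slope Q c l = lattice_slope Q c l0"
    unfolding l0_l lattice_slope_eq_slope of_int_vec_smult using \<open>0 < k\<close> by (simp add: slope_scaleR)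
  moreover have "lattice_slope Q c l0 \<le> lattice_slope Q c m" if "m \<in> lattice_cone W - {0}" for m
    using l0_min that unfolding lattice_slope_eq_slope is_arg_min_linorder
    by (simp add: of_int_vec_in_dual_cone_iff of_int_vec_eq_0_iff)
  ultimately show "\<exists>l. optimal_ops Q c W l"
    using \<open>indivisible l\<close> unfolding optimal_ops_def by (intro exI[of _ l]) auto
next
  fix l1 l2
  assume l1: "optimal_ops Q c W l1" and l2: "optimal_ops Q c W l2"
  let ?c = "of_int_vec c"
  have neg: "pair c l1 < 0" "pair c l2 < 0"
    using optimal_ops_pair_neg[OF Q l'] l1 l2 by auto
  have "(?c \<bullet> of_int_vec l2) *\<^sub>R of_int_vec l1 = (?c \<bullet> of_int_vec l1) *\<^sub>R of_int_vec l2"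
    using neg(1) neg(2)
    by (intro slope_min_ray_unique[OF pos_def_of_int_mat[OF Q] optimal_ops_slope_min[OF assms l1] _
          optimal_ops_slope_min[OF assms l2]]) (simp_all add: inner_of_int_vec)
  then have "pair c l2 *s l1 = pair c l1 *s l2"
    by (simp add: inner_of_int_vec flip: of_int_vec_smult of_int_vec_eq_iff)
  moreover have "0 < pair c l1 * pair c l2"
    using neg(1) neg(2) by (simp add: mult_neg_neg)
  moreover have "indivisible l1" "indivisible l2"
    using l1 l2 by (simp_all add: optimal_ops_def)
  ultimately show "l1 = l2"
    using indivisible_eq_if_proportional by blast
qed

lemma optimal_ops_between:
  assumes "W1 \<subseteq> W2" "W2 \<subseteq> W3" and "optimal_ops Q c W1 l" "l \<in> lattice_cone W3"
  shows "optimal_ops Q c W2 l"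
proof -
  have "lattice_cone W3 \<subseteq> lattice_cone W2" "lattice_cone W2 \<subseteq> lattice_cone W1"
    using assms(1,2) unfolding lattice_cone_def by auto
  with assms(3,4) show ?thesis
    unfolding optimal_ops_def by blast
qed

section \<open>Coordinate cells\<close>

lemma tendsto_powi_neg_imp_zero:
  fixes a y :: complex
  assumes "k < 0" and lim: "((\<lambda>t. t powi k * a) \<longlongrightarrow> y) (at 0)"
  shows "a = 0"
proof -
  have "((\<lambda>t. t ^ nat (-k) * (t powi k * a)) \<longlongrightarrow> 0 ^ nat (-k) * y) (at 0)"
    by (intro tendsto_intros lim)
  moreover have "eventually (\<lambda>t. t ^ nat (-k) * (t powi k * a) = a) (at 0)"
    using \<open>k < 0\<close> by (auto simp: eventually_at_filter power_int_def mult.assoc[symmetric]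
        simp flip: power_mult_distrib)
  ultimately have "((\<lambda>t. a) \<longlongrightarrow> 0 ^ nat (-k) * y) (at (0::complex))"
    by (rule Lim_transform_eventually)
  with \<open>k < 0\<close> have "((\<lambda>t. a) \<longlongrightarrow> 0) (at (0::complex))"
    by (simp add: power_0_left)
  then show ?thesis
    by (simp add: tendsto_const_iff)
qed

lemma limit_exists_iff: "limit_exists wt l x \<longleftrightarrow> (\<forall>i. x$i \<noteq> 0 \<longrightarrow> 0 \<le> pair (wt i) l)"
proof
  assume "limit_exists wt l x"
  then obtain y where "((\<lambda>t. ops_act wt l t x) \<longlongrightarrow> y) (at 0)"
    unfolding limit_exists_def by blast
  then have "((\<lambda>t. t powi pair (wt i) l * x$i) \<longlongrightarrow> y$i) (at 0)" for i
    using tendsto_vec_nth unfolding ops_act_def by fastforce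
  then show "\<forall>i. x$i \<noteq> 0 \<longrightarrow> 0 \<le> pair (wt i) l"
    using tendsto_powi_neg_imp_zero by (meson not_le)
next
  assume nonneg: "\<forall>i. x$i \<noteq> 0 \<longrightarrow> 0 \<le> pair (wt i) l"
  have "((\<lambda>t. ops_act wt l t x $ i) \<longlongrightarrow> 0 ^ nat (pair (wt i) l) * x$i) (at 0)" for i
  proof (cases "x$i = 0")
    case False
    then have "ops_act wt l t x $ i = t ^ nat (pair (wt i) l) * x$i" for t
      using nonneg by (simp add: ops_act_def power_int_def)
    then show ?thesis
      by (simp, intro tendsto_intros)
  qed (simp add: ops_act_def)
  then have "((\<lambda>t. ops_act wt l t x) \<longlongrightarrow> (\<chi> i. 0 ^ nat (pair (wt i) l) * x$i)) (at 0)"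
    by (intro vec_tendstoI) simp
  then show "limit_exists wt l x"
    unfolding limit_exists_def by blast
qed

lemma limit_exists_Lcell: "x \<in> Lcell S \<Longrightarrow> limit_exists wt l x \<longleftrightarrow> l \<in> lattice_cone (wt ` S)"
  unfolding limit_exists_iff Lcell_def lattice_cone_def by auto

lemma unstable_Lcell: "x \<in> Lcell S \<Longrightarrow> unstable wt c x \<longleftrightarrow> (\<exists>l \<in> lattice_cone (wt ` S). pair c l < 0)"
  unfolding unstable_def by (auto simp: limit_exists_Lcell)

lemma opt_ops_Lcell: "x \<in> Lcell S \<Longrightarrow> opt_ops wt Q c x = (THE l. optimal_ops Q c (wt ` S) l)"
  unfolding opt_ops_def optimal_ops_def lattice_slope_def by (simp add: limit_exists_Lcell Ball_def conj_commute)

lemma Lcell_subset_stratum_iff: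
  fixes wt :: "'n::finite \<Rightarrow> int^'r::finite"
  assumes Q: "inner_prod_ok Q"
  shows "Lcell S \<subseteq> stratum wt Q c l \<longleftrightarrow> optimal_ops Q c (wt ` S) l \<and> pair c l < 0"
proof
  assume sub: "Lcell S \<subseteq> stratum wt Q c l"
  define x where "x = ((\<chi> i. if i \<in> S then 1 else 0) :: complex^'n)"
  have x: "x \<in> Lcell S"
    by (simp add: x_def Lcell_def)
  then obtain l' where l': "l' \<in> lattice_cone (wt ` S)" "pair c l' < 0"
    using sub unstable_Lcell[OF x] unfolding stratum_def by blast
  then have ex1: "\<exists>!l. optimal_ops Q c (wt ` S) l"
    by (intro ex1_optimal_ops[OF Q]) auto
  have "opt_ops wt Q c x = l"
    using sub x unfolding stratum_def by blast
  then have "l = (THE l. optimal_ops Q c (wt ` S) l)"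
    using opt_ops_Lcell[OF x, of wt Q c] by simp
  then have opt: "optimal_ops Q c (wt ` S) l"
    using theI'[OF ex1] by simp
  moreover have "pair c l < 0"
    using optimal_ops_pair_neg[OF Q l' opt] .
  ultimately show "optimal_ops Q c (wt ` S) l \<and> pair c l < 0"
    by blast
next
  assume "optimal_ops Q c (wt ` S) l \<and> pair c l < 0"
  then have opt: "optimal_ops Q c (wt ` S) l" and neg: "pair c l < 0"
    by auto
  then have "l \<in> lattice_cone (wt ` S)"
    by (simp add: optimal_ops_def)
  then have "\<exists>!l. optimal_ops Q c (wt ` S) l"
    using neg by (intro ex1_optimal_ops[OF Q]) auto
  then have "(THE l. optimal_ops Q c (wt ` S) l) = l"
    using opt by (rule the1_equality)
  then show "Lcell S \<subseteq> stratum wt Q c l"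
    using \<open>l \<in> lattice_cone (wt ` S)\<close> neg
    by (auto simp: stratum_def unstable_Lcell opt_ops_Lcell)
qed

theorem lemma3p16:
  fixes wt :: "'n::finite \<Rightarrow> int^'r::finite"
    and Q :: "int^'r^'r"
    and c l :: "int^'r"
    and A B C :: "'n set"
  assumes "inner_prod_ok Q"
    and "l \<in> Lambda_set wt Q c"
    and "C \<subseteq> A"
    and "Lcell C \<subseteq> stratum wt Q c l"
    and "Lcell A \<subseteq> stratum wt Q c l"
    and "C \<subseteq> B" and "B \<subseteq> A"
  shows "Lcell B \<subseteq> stratum wt Q c l"
proof -
  note cell_iff = Lcell_subset_stratum_iff[OF assms(1)]
  have opt_C: "optimal_ops Q c (wt ` C) l" and "pair c l < 0"
    using assms(4) unfolding cell_iff by blast+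
  have "l \<in> lattice_cone (wt ` A)"
    using assms(5) unfolding cell_iff optimal_ops_def by blast
  then have "optimal_ops Q c (wt ` B) l"
    using optimal_ops_between[OF image_mono image_mono opt_C] assms(6,7) by blast
  with \<open>pair c l < 0\<close> show ?thesis
    unfolding cell_iff by blast
qed

end
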